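(* Let $(G,c)$ be a $k$-terminal network with terminal set $Q$, where $G$ is a connected plane graph and $c$ is such that any two distinct subsets of $E(G)$ have distinct total costs. Let $G^*$ be the planar dual of $G$. For $S\subset Q$ ($S\ne\emptyset,Q$) let $E_S$ be the (unique) cutset of the minimum-cost $S$-separating cut in $G$, and $E_S^*=\{e^*:e\in E_S\}$. Then for all such $S,T\subset Q$, the subgraph $G^*[E_S^*\cup E_T^*]$ of $G^*$ (consisting of the edges $E_S^*\cup E_T^*$ and their endpoints) has at most $6k$ vertices of degree greater than $2$.
   Context: The dual $G^*$ of a connected plane (multi-)graph $G$ has a vertex $v^*_f$ for each face $f$ of $G$, and for each edge $e\in E(G)$ lying on the boundary of faces $f_1,f_2$ a dual edge $e^*=(v^*_{f_1},v^*_{f_2})$ with cost $c(e^* )=c(e)$ ($G^*$ may have loops and parallel edges; a loop contributes 2 to the degree). For $S\subset Q$, $\bar S=Q\setminus S$; a cut $(W,V(G)\setminus W)$ is $S$-separating if $W\cap Q\in\{S,\bar S\}$; its cutset is the set of edges with exactly one endpoint in $W$, and its cost is the total cost of these edges. Edge costs are positive reals. *)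

theory Defs
  imports Complex_Main "HOL-Combinatorics.Permutations"
begin

text \<open>Plane multigraphs as combinatorial maps (rotation systems).
  Edges are the elements of a finite set E; each edge e has two darts (e,True), (e,False).
  A rotation sigma (a permutation of the darts) gives the cyclic order of darts around
  each vertex; vertices are the sigma-orbits, faces are the orbits of phi = sigma o alpha,
  where alpha swaps the two darts of an edge. A connected map is plane (genus 0)
  iff V - E + F = 2.\<close>

definition darts :: "'e set \<Rightarrow> ('e \<times> bool) set" where
  "darts E = E \<times> (UNIV :: bool set)"

definition alpha :: "'e \<times> bool \<Rightarrow> 'e \<times> bool" where
  "alpha d = (fst d, \<not> snd d)"

definition orb :: "('a \<Rightarrow> 'a) \<Rightarrow> 'a \<Rightarrow> 'a set" where
  "orb f x = range (\<lambda>n. (f ^^ n) x)"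

definition phi :: "('e \<times> bool \<Rightarrow> 'e \<times> bool) \<Rightarrow> 'e \<times> bool \<Rightarrow> 'e \<times> bool" where
  "phi \<sigma> = \<sigma> \<circ> alpha"

definition verts :: "'e set \<Rightarrow> ('e \<times> bool \<Rightarrow> 'e \<times> bool) \<Rightarrow> ('e \<times> bool) set set" where
  "verts E \<sigma> = (\<lambda>d. orb \<sigma> d) ` darts E"

definition faces :: "'e set \<Rightarrow> ('e \<times> bool \<Rightarrow> 'e \<times> bool) \<Rightarrow> ('e \<times> bool) set set" where
  "faces E \<sigma> = (\<lambda>d. orb (phi \<sigma>) d) ` darts E"

definition adj :: "'e set \<Rightarrow> ('e \<times> bool \<Rightarrow> 'e \<times> bool) \<Rightarrow> (('e \<times> bool) set \<times> ('e \<times> bool) set) set" where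
  "adj E \<sigma> = {(orb \<sigma> (e, b), orb \<sigma> (e, \<not> b)) | e b. e \<in> E}"

definition connected_map :: "'e set \<Rightarrow> ('e \<times> bool \<Rightarrow> 'e \<times> bool) \<Rightarrow> bool" where
  "connected_map E \<sigma> = (\<forall>u \<in> verts E \<sigma>. \<forall>v \<in> verts E \<sigma>. (u, v) \<in> (adj E \<sigma>)\<^sup>*)"

definition connected_plane_map :: "'e set \<Rightarrow> ('e \<times> bool \<Rightarrow> 'e \<times> bool) \<Rightarrow> bool" where
  "connected_plane_map E \<sigma> =
     (finite E \<and> \<sigma> permutes darts E \<and> connected_map E \<sigma> \<and>
      int (card (verts E \<sigma>)) - int (card E) + int (card (faces E \<sigma>)) = 2)"

definition cutset :: "'e set \<Rightarrow> ('e \<times> bool \<Rightarrow> 'e \<times> bool) \<Rightarrow> ('e \<times> bool) set set \<Rightarrow> 'e set" where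
  "cutset E \<sigma> W = {e \<in> E. (orb \<sigma> (e, True) \<in> W) \<noteq> (orb \<sigma> (e, False) \<in> W)}"

definition S_separating ::
  "'e set \<Rightarrow> ('e \<times> bool \<Rightarrow> 'e \<times> bool) \<Rightarrow> ('e \<times> bool) set set \<Rightarrow> ('e \<times> bool) set set \<Rightarrow> ('e \<times> bool) set set \<Rightarrow> bool" where
  "S_separating E \<sigma> Q S W = (W \<subseteq> verts E \<sigma> \<and> (W \<inter> Q = S \<or> W \<inter> Q = Q - S))"

definition min_S_cut ::
  "'e set \<Rightarrow> ('e \<times> bool \<Rightarrow> 'e \<times> bool) \<Rightarrow> ('e \<Rightarrow> real) \<Rightarrow> ('e \<times> bool) set set \<Rightarrow> ('e \<times> bool) set set \<Rightarrow> ('e \<times> bool) set set \<Rightarrow> bool" where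
  "min_S_cut E \<sigma> c Q S W = (S_separating E \<sigma> Q S W \<and>
     (\<forall>W'. S_separating E \<sigma> Q S W' \<longrightarrow> sum c (cutset E \<sigma> W) \<le> sum c (cutset E \<sigma> W')))"

text \<open>Degree of the dual vertex (face) f in the subgraph G*[X*]: number of darts of edges in X
  lying on face f (the dual edge e* joins the faces of (e,True) and (e,False); a loop counts 2).\<close>
definition dual_deg :: "'e set \<Rightarrow> ('e \<times> bool \<Rightarrow> 'e \<times> bool) \<Rightarrow> 'e set \<Rightarrow> ('e \<times> bool) set \<Rightarrow> nat" where
  "dual_deg E \<sigma> X f = card {d \<in> darts E. fst d \<in> X \<and> orb (phi \<sigma>) d = f}"

end

theory Submission
  imports Defs "HOL-Combinatorics.Orbits"
begin

text \<open>
  Let X be the union of the two minimum cutsets and let alpha_cut be the edge involution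
  of the map with the edges of X cut open (their darts become fixed points).  For permutations
  p, r of a finite set A, counting cycles c(.) and connected components c(p, r) of the graph
  generated by both, one has the genus inequality
    c(p) + c(r) + c(p o r) <= |A| + 2 c(p, r).
  Applied to the rotation sigma and alpha_cut it relates the vertices, the edges, the faces not
  touched by X (they remain cycles of sigma o alpha_cut) and the components of the graph in which
  the edges of X are deleted.  By an uncrossing argument for minimum cuts with distinct costs,
  every such component contains a terminal, so there are at most |Q| of them; with Euler's
  formula this gives |X| + 2 <= |touched faces| + 2|Q|.  Finally every face touched by X meets X
  in an even, hence at least two, number of darts of each cutset, so the degree sum
  2|X| >= 2|touched| + #(faces of degree > 2), and the bound 4|Q| - 4 <= 6|Q| follows.
\<close>

section \<open>Connected components of a relation\<close>

definition linked :: "('a \<times> 'a) set \<Rightarrow> ('a \<times> 'a) set" where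
  "linked R = (R \<union> R\<inverse>)\<^sup>*"

definition component :: "('a \<times> 'a) set \<Rightarrow> 'a \<Rightarrow> 'a set" where
  "component R x = {y. (x, y) \<in> linked R}"

definition ncomp :: "'a set \<Rightarrow> ('a \<times> 'a) set \<Rightarrow> nat" where
  "ncomp A R = card (component R ` A)"

lemma linked_refl [simp]: "(x, x) \<in> linked R"
  by (simp add: linked_def)

lemma linked_edge: "(x, y) \<in> R \<Longrightarrow> (x, y) \<in> linked R"
  by (auto simp: linked_def)

lemma linked_sym: "(x, y) \<in> linked R \<Longrightarrow> (y, x) \<in> linked R"
proof -
  assume "(x, y) \<in> linked R"
  then have "(y, x) \<in> ((R \<union> R\<inverse>)\<inverse>)\<^sup>*"
    unfolding linked_def by (simp add: rtrancl_converseI)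
  moreover have "(R \<union> R\<inverse>)\<inverse> = R \<union> R\<inverse>" by auto
  ultimately show ?thesis unfolding linked_def by simp
qed

lemma linked_trans: "(x, y) \<in> linked R \<Longrightarrow> (y, z) \<in> linked R \<Longrightarrow> (x, z) \<in> linked R"
  unfolding linked_def by (rule rtrancl_trans)

lemma linked_mono:
  assumes "R \<subseteq> linked R'"
  shows "linked R \<subseteq> linked R'"
proof -
  have "R\<inverse> \<subseteq> linked R'"
  proof
    fix p assume "p \<in> R\<inverse>"
    then obtain a b where "p = (a, b)" "(b, a) \<in> R" by auto
    then show "p \<in> linked R'"
      using assms linked_sym[of b a R'] by auto
  qed
  with assms have "R \<union> R\<inverse> \<subseteq> (R' \<union> R'\<inverse>)\<^sup>*"
    unfolding linked_def by (rule Un_least)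
  then show ?thesis
    unfolding linked_def by (rule rtrancl_subset_rtrancl)
qed

lemma subset_linked: "R \<subseteq> R' \<Longrightarrow> R \<subseteq> linked R'"
proof
  fix e assume "R \<subseteq> R'" "e \<in> R"
  then show "e \<in> linked R'"
    using linked_edge[of "fst e" "snd e" R'] by auto
qed

lemma component_eq_iff: "component R x = component R y \<longleftrightarrow> (x, y) \<in> linked R"
proof
  assume "component R x = component R y"
  moreover have "y \<in> component R y"
    unfolding component_def by simp
  ultimately show "(x, y) \<in> linked R"
    unfolding component_def by blast
next
  assume xy: "(x, y) \<in> linked R"
  show "component R x = component R y"
    unfolding component_def using linked_trans[OF xy] linked_trans[OF linked_sym[OF xy]] by auto
qed

lemma component_meet:
  assumes "x \<in> component R a" "x \<in> component R b"
  shows "component R a = component R b"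
proof -
  have "(a, x) \<in> linked R" "(x, b) \<in> linked R"
    using assms linked_sym[of b x R] unfolding component_def by auto
  then show ?thesis
    using component_eq_iff[of R a b] linked_trans[of a x R b] by blast
qed

lemma component_edge_closed:
  assumes "(a, b) \<in> R"
  shows "a \<in> component R x \<longleftrightarrow> b \<in> component R x"
proof -
  have ab: "(a, b) \<in> linked R"
    using linked_edge[OF assms] .
  show ?thesis
    unfolding component_def using linked_trans[OF _ ab, of x] linked_trans[OF _ linked_sym[OF ab], of x]
    by auto
qed

lemma component_subset_closed:
  assumes closed: "\<forall>(a, b) \<in> R. a \<in> C \<longleftrightarrow> b \<in> C" and "x \<in> C"
  shows "component R x \<subseteq> C"
proof
  fix y assume "y \<in> component R x"
  then have "(x, y) \<in> (R \<union> R\<inverse>)\<^sup>*"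
    unfolding component_def linked_def by simp
  then show "y \<in> C"
  proof (induction rule: rtrancl_induct)
    case base
    show ?case using \<open>x \<in> C\<close> .
  next
    case (step y z)
    then show ?case using closed by blast
  qed
qed

lemma component_coarsen:
  assumes "R \<subseteq> linked R'"
  shows "\<Union> (component R' ` component R x) = component R' x"
proof
  show "\<Union> (component R' ` component R x) \<subseteq> component R' x"
  proof
    fix z assume "z \<in> \<Union> (component R' ` component R x)"
    then obtain y where "(x, y) \<in> linked R" "(y, z) \<in> linked R'"
      unfolding component_def by auto
    then show "z \<in> component R' x"
      using linked_mono[OF assms] linked_trans[of x y R' z] unfolding component_def by auto
  qed
  show "component R' x \<subseteq> \<Union> (component R' ` component R x)"
    unfolding component_def by force
qed

lemma components_coarsen:
  assumes "R \<subseteq> linked R'"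
  shows "component R' ` A = (\<lambda>C. \<Union> (component R' ` C)) ` component R ` A"
  unfolding image_image component_coarsen[OF assms] ..

lemma ncomp_mono:
  assumes "finite A" "R \<subseteq> linked R'"
  shows "ncomp A R' \<le> ncomp A R"
proof -
  have "ncomp A R' = card ((\<lambda>C. \<Union> (component R' ` C)) ` component R ` A)"
    unfolding ncomp_def components_coarsen[OF assms(2), of A] ..
  also have "\<dots> \<le> ncomp A R"
    unfolding ncomp_def using assms(1) by (simp add: card_image_le)
  finally show ?thesis .
qed

lemma linked_insert_cases:
  assumes "(z, w) \<in> linked (insert (u, x) R)"
  shows "(z, w) \<in> linked R \<or>
    (((z, u) \<in> linked R \<or> (z, x) \<in> linked R) \<and> ((w, u) \<in> linked R \<or> (w, x) \<in> linked R))"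
  using assms unfolding linked_def[of "insert (u, x) R"]
proof (induction rule: rtrancl_induct)
  case base
  then show ?case by simp
next
  case (step y w)
  from step(2) have "(y, w) \<in> linked R \<or> (y = u \<and> w = x) \<or> (y = x \<and> w = u)"
    using linked_edge[of y w R] linked_sym[OF linked_edge[of w y R]] by auto
  then show ?case
  proof (elim disjE)
    assume yw: "(y, w) \<in> linked R"
    have wy: "(w, y) \<in> linked R"
      using linked_sym[OF yw] .
    show ?thesis
      using step(3) linked_trans[OF _ yw, of z] linked_trans[OF wy, of u] linked_trans[OF wy, of x]
      by blast
  qed (use step(3) in auto)
qed

lemma ncomp_insert_le:
  assumes "finite A"
  shows "ncomp A R \<le> ncomp A (insert (u, x) R) + 1"
proof -
  let ?R' = "insert (u, x) R"
  let ?merge = "\<lambda>C. \<Union> (component ?R' ` C)"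
  let ?cs = "component R ` A"
  have R: "R \<subseteq> linked ?R'"
    using linked_edge[of _ _ ?R'] by auto
  have "inj_on ?merge (?cs - {component R u})"
  proof (rule inj_onI)
    fix C1 C2
    assume C1: "C1 \<in> ?cs - {component R u}" and C2: "C2 \<in> ?cs - {component R u}"
      and eq: "?merge C1 = ?merge C2"
    obtain z w where zw: "C1 = component R z" "C2 = component R w"
      using C1 C2 by auto
    have "component ?R' z = component ?R' w"
      using eq zw component_coarsen[OF R] by simp
    then have "(z, w) \<in> linked ?R'"
      using component_eq_iff by metis
    moreover have "(z, u) \<notin> linked R" "(w, u) \<notin> linked R"
      using C1 C2 zw component_eq_iff[of R _ u] by auto
    ultimately have "(z, w) \<in> linked R"
      using linked_insert_cases[of z w u x R] linked_trans[OF _ linked_sym, of z x R w] by blast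
    then show "C1 = C2"
      using zw component_eq_iff[of R z w] by simp
  qed
  then have "card (?cs - {component R u}) = card (?merge ` (?cs - {component R u}))"
    by (simp add: card_image)
  also have "\<dots> \<le> ncomp A ?R'"
    unfolding ncomp_def components_coarsen[OF R, of A] using assms by (intro card_mono) auto
  finally show ?thesis
    unfolding ncomp_def using assms by (simp add: card_Diff_singleton_if split: if_splits)
qed

lemma ncomp_insert_less:
  assumes "finite A" "u \<in> A" "x \<in> A" "(u, x) \<notin> linked R"
  shows "ncomp A (insert (u, x) R) < ncomp A R"
proof -
  let ?R' = "insert (u, x) R"
  let ?merge = "\<lambda>C. \<Union> (component ?R' ` C)"
  let ?cs = "component R ` A"
  have R: "R \<subseteq> linked ?R'"
    using linked_edge[of _ _ ?R'] by auto
  have x_other: "component R x \<in> ?cs - {component R u}"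
    using assms(3,4) component_eq_iff[of R x u] linked_sym[of x u R] by blast
  have "component ?R' u = component ?R' x"
    using component_eq_iff[of ?R' u x] linked_edge[of u x ?R'] by simp
  then have merge_ux: "?merge (component R u) = ?merge (component R x)"
    unfolding component_coarsen[OF R] .
  have "?merge ` ?cs \<subseteq> ?merge ` (?cs - {component R u})"
  proof
    fix M assume "M \<in> ?merge ` ?cs"
    then obtain C where C: "C \<in> ?cs" "M = ?merge C" by blast
    show "M \<in> ?merge ` (?cs - {component R u})"
    proof (cases "C = component R u")
      case True
      then show ?thesis using C(2) merge_ux x_other by blast
    next
      case False
      then show ?thesis using C by blast
    qed
  qed
  then have "?merge ` ?cs = ?merge ` (?cs - {component R u})" by blast
  then have "ncomp A ?R' \<le> card (?cs - {component R u})"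
    unfolding ncomp_def components_coarsen[OF R, of A] using assms(1) by (simp add: card_image_le)
  also have "\<dots> < ncomp A R"
    unfolding ncomp_def using assms(1,2) by (intro card_Diff1_less) auto
  finally show ?thesis .
qed

section \<open>Cycles of permutations and the genus inequality\<close>

text \<open>For a permutation, the iterate orbit used in the map definitions is the library orbit,
  which gives us that orbits partition the domain.\<close>

lemma orb_eq_orbit: "permutation p \<Longrightarrow> orb p x = orbit p x"
  by (simp add: orb_def orbit_altdef_permutation full_SetCompr_eq)

lemma orb_iter: "(p ^^ n) x \<in> orb p x"
  unfolding orb_def by (rule rangeI)

lemma orb_self: "x \<in> orb p x"
  using orb_iter[of 0 p x] by simp

lemma orb_step: "y \<in> orb p x \<Longrightarrow> p y \<in> orb p x"
proof -
  assume "y \<in> orb p x"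
  then obtain n where "y = (p ^^ n) x"
    unfolding orb_def by blast
  then have "p y = (p ^^ Suc n) x" by simp
  then show ?thesis
    using orb_iter by metis
qed

lemma orb_eq: "permutation p \<Longrightarrow> y \<in> orb p x \<Longrightarrow> orb p y = orb p x"
  by (simp add: orb_eq_orbit orbit_cyclic_eq3[OF cyclic_on_orbit'])

lemma orb_step_back:
  assumes "permutation p" "p y \<in> orb p x"
  shows "y \<in> orb p x"
proof -
  have "orb p (p y) = orb p y"
    using orb_eq_orbit[OF assms(1)] permutation_orbit_step[OF assms(1)] by metis
  then have "y \<in> orb p (p y)"
    using orb_self[of y p] by blast
  then show ?thesis
    unfolding orb_eq[OF assms] .
qed

lemma bij_betw_orb:
  assumes "permutation p"
  shows "bij_betw p (orb p x) (orb p x)"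
proof (rule bij_betw_imageI)
  have bij: "bij p"
    using assms by (rule permutation_bijective)
  then show "inj_on p (orb p x)"
    using bij_is_inj inj_on_subset by blast
  have "p ` orb p x \<subseteq> orb p x"
    using orb_step[of _ p x] by blast
  moreover have "orb p x \<subseteq> p ` orb p x"
  proof
    fix y assume "y \<in> orb p x"
    moreover have "p (inv p y) = y"
      using bij by (simp add: bij_is_surj surj_f_inv_f)
    ultimately have "inv p y \<in> orb p x"
      using orb_step_back[OF assms, of "inv p y" x] by simp
    then show "y \<in> p ` orb p x"
      using \<open>p (inv p y) = y\<close> by (metis image_eqI)
  qed
  ultimately show "p ` orb p x = orb p x" ..
qed

lemma orb_subset:
  assumes "p permutes D" "x \<in> D"
  shows "orb p x \<subseteq> D"
  unfolding orb_def using permutes_in_funpow_image[OF assms] by auto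

lemma orb_fixpoint: "p x = x \<Longrightarrow> orb p x = {x}"
proof -
  assume "p x = x"
  then have "(p ^^ n) x = x" for n
    by (induction n) simp_all
  then show ?thesis
    unfolding orb_def by auto
qed

lemma orb_involution:
  assumes "\<And>y. f (f y) = y"
  shows "orb f x = {x, f x}"
proof -
  have iter: "(f ^^ n) x \<in> {x, f x}" for n
    by (induction n) (auto simp: assms)
  show ?thesis
    unfolding orb_def
  proof
    show "range (\<lambda>n. (f ^^ n) x) \<subseteq> {x, f x}"
      using iter by blast
    show "{x, f x} \<subseteq> range (\<lambda>n. (f ^^ n) x)"
      using rangeI[of "\<lambda>n. (f ^^ n) x" 0] rangeI[of "\<lambda>n. (f ^^ n) x" 1] by simp
  qed
qed

text \<open>The functional graph of p on A; for a permutation its components are the cycles of p.\<close>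

definition fgraph :: "'a set \<Rightarrow> ('a \<Rightarrow> 'a) \<Rightarrow> ('a \<times> 'a) set" where
  "fgraph A p = (\<lambda>z. (z, p z)) ` A"

lemma fgraph_edge: "z \<in> A \<Longrightarrow> (z, p z) \<in> fgraph A p"
  unfolding fgraph_def by blast

lemma linked_fgraph_iter:
  assumes "p permutes A" "x \<in> A"
  shows "(x, (p ^^ n) x) \<in> linked (fgraph A p)"
proof (induction n)
  case 0
  show ?case by simp
next
  case (Suc n)
  have "(p ^^ n) x \<in> A"
    using permutes_in_funpow_image[OF assms] .
  then have "((p ^^ n) x, (p ^^ Suc n) x) \<in> linked (fgraph A p)"
    using linked_edge[OF fgraph_edge] by simp
  then show ?case
    using linked_trans[OF Suc.IH] by blast
qed

lemma component_fgraph: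
  assumes "finite A" "p permutes A" "x \<in> A"
  shows "component (fgraph A p) x = orb p x"
proof
  have perm: "permutation p"
    using assms(1,2) permutation_permutes by blast
  have "a \<in> orb p x \<longleftrightarrow> p a \<in> orb p x" for a
    using orb_step[of a p x] orb_step_back[OF perm, of a x] by blast
  then have "\<forall>(a, b) \<in> fgraph A p. a \<in> orb p x \<longleftrightarrow> b \<in> orb p x"
    unfolding fgraph_def by auto
  then show "component (fgraph A p) x \<subseteq> orb p x"
    using component_subset_closed orb_self by metis
  show "orb p x \<subseteq> component (fgraph A p) x"
    unfolding orb_def component_def using linked_fgraph_iter[OF assms(2,3)] by blast
qed

lemma orb_subset_component:
  assumes "finite A" "p permutes A" "fgraph A p \<subseteq> R" "a \<in> component R d" "a \<in> A"
  shows "orb p a \<subseteq> component R d"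
proof -
  have "component R a = component R d"
    using component_meet[of a R a d] assms(4) by (simp add: component_def)
  moreover have "linked (fgraph A p) \<subseteq> linked R"
    using assms(3) by (intro linked_mono subset_linked)
  ultimately show ?thesis
    using component_fgraph[OF assms(1,2,5)] unfolding component_def by blast
qed

lemma ncomp_fgraph:
  assumes "finite A" "p permutes A"
  shows "ncomp A (fgraph A p) = card (orb p ` A)"
  unfolding ncomp_def using component_fgraph[OF assms] by (simp cong: image_cong)

text \<open>Each step of p o r is an r-step followed by a p-step.\<close>

lemma fgraph_comp:
  assumes "r permutes A"
  shows "fgraph A (p \<circ> r) \<subseteq> linked (fgraph A p \<union> fgraph A r)"
proof
  fix e assume "e \<in> fgraph A (p \<circ> r)"
  then obtain z where z: "z \<in> A" "e = (z, p (r z))"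
    unfolding fgraph_def by auto
  have "r z \<in> A"
    using permutes_in_image[OF assms] z(1) by simp
  then have "(z, p (r z)) \<in> linked (fgraph A p \<union> fgraph A r)"
    using linked_trans[OF linked_edge[OF UnI2[OF fgraph_edge[OF z(1)]]]
        linked_edge[OF UnI1[OF fgraph_edge]]] by blast
  then show "e \<in> linked (fgraph A p \<union> fgraph A r)"
    using z(2) by simp
qed

lemma fgraph_comp_transpose:
  assumes "u \<in> A" "x \<in> A"
  shows "fgraph A (p \<circ> Transposition.transpose u x) \<subseteq> linked (insert (u, x) (fgraph A p))"
proof
  let ?R = "insert (u, x) (fgraph A p)"
  have ux: "(u, x) \<in> linked ?R"
    by (rule linked_edge) simp
  have step: "(w, p w) \<in> linked ?R" if "w \<in> A" for w
    using linked_edge[OF insertI2[OF fgraph_edge[OF that]]] .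
  fix e assume "e \<in> fgraph A (p \<circ> Transposition.transpose u x)"
  then obtain z where z: "z \<in> A" "e = (z, p (Transposition.transpose u x z))"
    unfolding fgraph_def by auto
  consider "z = u" | "z = x" "z \<noteq> u" | "z \<noteq> u" "z \<noteq> x"
    by blast
  then show "e \<in> linked ?R"
  proof cases
    case 1
    then show ?thesis
      using z linked_trans[OF ux step[OF assms(2)]] by simp
  next
    case 2
    then show ?thesis
      using z linked_trans[OF linked_sym[OF ux] step[OF assms(1)]] by simp
  next
    case 3
    then show ?thesis
      using z step by simp
  qed
qed

text \<open>If u and x lie in different cycles of p, then p o (u x) splices the two cycles into one:
  starting from u it walks along the cycle of x.\<close>

lemma transpose_joins_cycles:
  assumes "finite A" "p permutes A" "u \<in> A" "x \<in> A" "(u, x) \<notin> linked (fgraph A p)"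
  shows "(u, x) \<in> linked (fgraph A (p \<circ> Transposition.transpose u x))"
proof -
  define q where "q = p \<circ> Transposition.transpose u x"
  let ?L = "linked (fgraph A q)"
  have q_other: "q y = p y" if "y \<noteq> u" "y \<noteq> x" for y
    unfolding q_def using that by simp
  have walk: "(u, (p ^^ Suc j) x) \<in> ?L \<or> (u, x) \<in> ?L" for j
  proof (induction j)
    case 0
    have "q u = p x"
      unfolding q_def by simp
    then show ?case
      using linked_edge[OF fgraph_edge[OF assms(3), of q]] by simp
  next
    case (Suc j)
    define y where "y = (p ^^ Suc j) x"
    have yA: "y \<in> A"
      unfolding y_def using permutes_in_funpow_image[OF assms(2,4)] .
    have "y \<noteq> u"
    proof
      assume "y = u"
      then have "(x, u) \<in> linked (fgraph A p)"
        using linked_fgraph_iter[OF assms(2,4), of "Suc j"] unfolding y_def by simp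
      then show False
        using assms(5) linked_sym[of x u] by blast
    qed
    show ?case
    proof (cases "y = x")
      case True
      then show ?thesis
        using Suc.IH unfolding y_def by auto
    next
      case False
      then have "q y = (p ^^ Suc (Suc j)) x"
        using q_other[OF \<open>y \<noteq> u\<close>] unfolding y_def by simp
      then have "(y, (p ^^ Suc (Suc j)) x) \<in> ?L"
        using linked_edge[OF fgraph_edge[OF yA, of q]] by simp
      then show ?thesis
        using Suc.IH linked_trans[of u y "fgraph A q"] unfolding y_def by blast
    qed
  qed
  have "permutation p"
    using assms(1,2) permutation_permutes by blast
  then obtain n where "0 < n" "(p ^^ n) x = x"
    using permutation_self[of p x] by blast
  then obtain j where "(p ^^ Suc j) x = x"
    using gr0_implies_Suc[of n] by auto
  then show ?thesis
    using walk[of j] unfolding q_def by auto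
qed

lemma transpose_transpose_comp:
  "(p \<circ> Transposition.transpose u x) \<circ> Transposition.transpose u x = p"
  by (simp add: o_assoc[symmetric])

lemma ncomp_transpose_le:
  assumes "finite A" "p permutes A" "u \<in> A" "x \<in> A"
  shows "ncomp A (fgraph A (p \<circ> Transposition.transpose u x)) \<le> ncomp A (fgraph A p) + 1"
proof -
  let ?q = "p \<circ> Transposition.transpose u x"
  have "fgraph A p \<subseteq> linked (insert (u, x) (fgraph A ?q))"
    using fgraph_comp_transpose[OF assms(3,4), of ?q] unfolding transpose_transpose_comp .
  then have "ncomp A (insert (u, x) (fgraph A ?q)) \<le> ncomp A (fgraph A p)"
    by (rule ncomp_mono[OF assms(1)])
  then show ?thesis
    using ncomp_insert_le[OF assms(1), of "fgraph A ?q" u x] by simp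
qed

lemma ncomp_transpose_less:
  assumes "finite A" "p permutes A" "u \<in> A" "x \<in> A" "(u, x) \<notin> linked (fgraph A p)"
  shows "ncomp A (fgraph A (p \<circ> Transposition.transpose u x)) < ncomp A (fgraph A p)"
proof -
  let ?q = "p \<circ> Transposition.transpose u x"
  have joined: "(u, x) \<in> linked (fgraph A ?q)"
    by (rule transpose_joins_cycles[OF assms])
  have "fgraph A p \<subseteq> linked (insert (u, x) (fgraph A ?q))"
    using fgraph_comp_transpose[OF assms(3,4), of ?q] unfolding transpose_transpose_comp .
  also have "\<dots> \<subseteq> linked (fgraph A ?q)"
    using joined linked_edge[of _ _ "fgraph A ?q"] by (intro linked_mono) auto
  finally have "insert (u, x) (fgraph A p) \<subseteq> linked (fgraph A ?q)"
    using joined by simp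
  then have "ncomp A (fgraph A ?q) \<le> ncomp A (insert (u, x) (fgraph A p))"
    by (rule ncomp_mono[OF assms(1)])
  also have "\<dots> < ncomp A (fgraph A p)"
    by (rule ncomp_insert_less[OF assms(1,3,4,5)])
  finally show ?thesis .
qed

lemma ncomp_fgraph_id:
  assumes "finite A" "r permutes A" "\<forall>z \<in> A. r z = z"
  shows "ncomp A (fgraph A r) = card A"
proof -
  have "orb r ` A = (\<lambda>z. {z}) ` A"
    using assms(3) orb_fixpoint[of r] by (simp cong: image_cong)
  then show ?thesis
    unfolding ncomp_fgraph[OF assms(1,2)] by (simp add: card_image)
qed

lemma cycle_count_inequality_step:
  fixes p r :: "'a \<Rightarrow> 'a"
  assumes fin: "finite A" and p: "p permutes A" and r: "r permutes A"
    and ux: "u \<in> A" "x \<in> A" "u \<noteq> x" and fix_x: "r x = x"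
    and ineq: "ncomp A (fgraph A p) + ncomp A (fgraph A r) + ncomp A (fgraph A (p \<circ> r))
      \<le> card A + 2 * ncomp A (fgraph A p \<union> fgraph A r)"
  defines "r' \<equiv> r \<circ> Transposition.transpose u x"
  shows "ncomp A (fgraph A p) + ncomp A (fgraph A r') + ncomp A (fgraph A (p \<circ> r'))
      \<le> card A + 2 * ncomp A (fgraph A p \<union> fgraph A r')"
proof -
  let ?t = "Transposition.transpose u x"
  have "component (fgraph A r) x = {x}"
    using component_fgraph[OF fin r ux(2)] orb_fixpoint[of r x, OF fix_x] by simp
  then have "(u, x) \<notin> linked (fgraph A r)"
    using ux(3) linked_sym[of u x] unfolding component_def by blast
  then have r'_less: "ncomp A (fgraph A r') < ncomp A (fgraph A r)"
    unfolding r'_def by (rule ncomp_transpose_less[OF fin r ux(1,2)])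
  have pr: "p \<circ> r permutes A"
    using permutes_compose[OF r p] .
  have pr': "p \<circ> r' = (p \<circ> r) \<circ> ?t"
    unfolding r'_def by (simp add: o_assoc)
  let ?R = "fgraph A p \<union> fgraph A r"
  have "fgraph A r' \<subseteq> linked (insert (u, x) (fgraph A r))"
    unfolding r'_def by (rule fgraph_comp_transpose[OF ux(1,2)])
  also have "\<dots> \<subseteq> linked (insert (u, x) ?R)"
    by (intro linked_mono subset_linked) blast
  finally have "fgraph A p \<union> fgraph A r' \<subseteq> linked (insert (u, x) ?R)"
    using subset_linked[of "fgraph A p" "insert (u, x) ?R"] by blast
  then have joined: "ncomp A (insert (u, x) ?R) \<le> ncomp A (fgraph A p \<union> fgraph A r')"
    by (rule ncomp_mono[OF fin])
  show ?thesis
  proof (cases "(u, x) \<in> linked (fgraph A (p \<circ> r))")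
    case True
    then have "(u, x) \<in> linked ?R"
      using linked_mono[OF fgraph_comp[OF r]] by blast
    then have "insert (u, x) ?R \<subseteq> linked ?R"
      using subset_linked[of ?R ?R] by blast
    then have "ncomp A ?R \<le> ncomp A (insert (u, x) ?R)"
      by (rule ncomp_mono[OF fin])
    moreover have "ncomp A (fgraph A (p \<circ> r')) \<le> ncomp A (fgraph A (p \<circ> r)) + 1"
      unfolding pr' by (rule ncomp_transpose_le[OF fin pr ux(1,2)])
    ultimately show ?thesis
      using ineq r'_less joined by linarith
  next
    case False
    have "ncomp A (fgraph A (p \<circ> r')) < ncomp A (fgraph A (p \<circ> r))"
      unfolding pr' by (rule ncomp_transpose_less[OF fin pr ux(1,2) False])
    moreover have "ncomp A ?R \<le> ncomp A (insert (u, x) ?R) + 1"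
      by (rule ncomp_insert_le[OF fin])
    ultimately show ?thesis
      using ineq r'_less joined by linarith
  qed
qed

lemma peel_transposition:
  assumes fin: "finite A" and r: "r permutes A" and x: "x \<in> A" "r x \<noteq> x"
  obtains u r' where "u \<in> A" "u \<noteq> x" "r' permutes A" "r' x = x"
    "r = r' \<circ> Transposition.transpose u x"
    "card {z \<in> A. r' z \<noteq> z} < card {z \<in> A. r z \<noteq> z}"
proof -
  define u where "u = inv r x"
  define r' where "r' = r \<circ> Transposition.transpose u x"
  have rux: "r u = x"
    unfolding u_def using permutes_inverses(1)[OF r] .
  have u: "u \<in> A" "u \<noteq> x"
    unfolding u_def using permutes_in_image[OF permutes_inv[OF r]] x rux u_def by auto
  have r': "r' permutes A" "r' x = x"
    unfolding r'_def using permutes_compose[OF permutes_swap_id[OF u(1) x(1)] r] rux by auto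
  have "{z \<in> A. r' z \<noteq> z} \<subseteq> {z \<in> A. r z \<noteq> z} - {x}"
  proof
    fix z assume z: "z \<in> {z \<in> A. r' z \<noteq> z}"
    then have "z \<noteq> x"
      using r'(2) by auto
    moreover have "r z \<noteq> z"
      using z rux u(2) \<open>z \<noteq> x\<close> unfolding r'_def by (cases "z = u") auto
    ultimately show "z \<in> {z \<in> A. r z \<noteq> z} - {x}"
      using z by blast
  qed
  moreover have moved_fin: "finite {z \<in> A. r z \<noteq> z}"
    using fin by simp
  ultimately have "card {z \<in> A. r' z \<noteq> z} \<le> card ({z \<in> A. r z \<noteq> z} - {x})"
    by (intro card_mono) auto
  also have "\<dots> < card {z \<in> A. r z \<noteq> z}"
    using x moved_fin by (intro card_Diff1_less) auto
  finally have fewer: "card {z \<in> A. r' z \<noteq> z} < card {z \<in> A. r z \<noteq> z}" .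
  have "r = r' \<circ> Transposition.transpose u x"
    unfolding r'_def by (rule transpose_transpose_comp[symmetric])
  from that[OF u r' this fewer] show ?thesis .
qed

theorem cycle_count_inequality:
  assumes "finite A" "p permutes A" "r permutes A"
  shows "ncomp A (fgraph A p) + ncomp A (fgraph A r) + ncomp A (fgraph A (p \<circ> r))
    \<le> card A + 2 * ncomp A (fgraph A p \<union> fgraph A r)"
  using assms(3)
proof (induction "card {z \<in> A. r z \<noteq> z}" arbitrary: r rule: less_induct)
  case less
  show ?case
  proof (cases "\<forall>z \<in> A. r z = z")
    case True
    have "fgraph A r \<subseteq> linked (fgraph A p)"
      unfolding fgraph_def using True by auto
    moreover have "fgraph A p \<subseteq> linked (fgraph A p)"
      by (rule subset_linked) simp
    ultimately have "ncomp A (fgraph A p) \<le> ncomp A (fgraph A p \<union> fgraph A r)"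
      by (intro ncomp_mono[OF assms(1)]) simp
    moreover have "fgraph A (p \<circ> r) = fgraph A p"
      unfolding fgraph_def using True by auto
    ultimately show ?thesis
      using ncomp_fgraph_id[OF assms(1) less.prems True] by simp
  next
    case False
    then obtain x where x: "x \<in> A" "r x \<noteq> x" by blast
    obtain u r' where u: "u \<in> A" "u \<noteq> x" and r': "r' permutes A" "r' x = x"
      and r_eq: "r = r' \<circ> Transposition.transpose u x"
      and fewer: "card {z \<in> A. r' z \<noteq> z} < card {z \<in> A. r z \<noteq> z}"
      using peel_transposition[OF assms(1) less.prems x] by blast
    have "ncomp A (fgraph A p) + ncomp A (fgraph A r') + ncomp A (fgraph A (p \<circ> r'))
        \<le> card A + 2 * ncomp A (fgraph A p \<union> fgraph A r')"
      using less.hyps[OF fewer r'(1)] .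
    then show ?thesis
      unfolding r_eq by (rule cycle_count_inequality_step[OF assms(1,2) r'(1) u(1) x(1) u(2) r'(2)])
  qed
qed

section \<open>Darts, faces and the cut-open edge involution\<close>

lemma darts_mem: "d \<in> darts E \<longleftrightarrow> fst d \<in> E"
  unfolding darts_def by (cases d) auto

lemma alpha_simps [simp]: "fst (alpha d) = fst d" "alpha (alpha d) = d"
  unfolding alpha_def by (cases d; simp)+

lemma finite_darts: "finite E \<Longrightarrow> finite (darts E)"
  unfolding darts_def by simp

lemma card_darts: "finite E \<Longrightarrow> card (darts E) = 2 * card E"
  unfolding darts_def by (simp add: card_cartesian_product)

text \<open>The face permutation phi sigma = sigma o alpha moves points outside the darts; face_perm is its
  restriction to the darts, a genuine permutation with the same orbits on darts.\<close>

definition face_perm :: "'e set \<Rightarrow> ('e \<times> bool \<Rightarrow> 'e \<times> bool) \<Rightarrow> 'e \<times> bool \<Rightarrow> 'e \<times> bool" where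
  "face_perm E \<sigma> d = (if d \<in> darts E then \<sigma> (alpha d) else d)"

lemma face_perm_dart: "d \<in> darts E \<Longrightarrow> face_perm E \<sigma> d = \<sigma> (alpha d)"
  by (simp add: face_perm_def)

lemma face_perm_permutes:
  assumes "\<sigma> permutes darts E"
  shows "face_perm E \<sigma> permutes darts E"
proof (rule bij_imp_permutes)
  have "bij_betw alpha (darts E) (darts E)"
    by (rule bij_betwI[of _ _ _ alpha]) (auto simp: darts_mem)
  then have "bij_betw (\<sigma> \<circ> alpha) (darts E) (darts E)"
    using permutes_imp_bij[OF assms] by (rule bij_betw_trans)
  then show "bij_betw (face_perm E \<sigma>) (darts E) (darts E)"
    by (rule bij_betw_cong[THEN iffD1, rotated]) (simp add: face_perm_def)
qed (simp add: face_perm_def)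

lemma orb_phi_face_perm:
  assumes "\<sigma> permutes darts E" "d \<in> darts E"
  shows "orb (phi \<sigma>) d = orb (face_perm E \<sigma>) d"
proof -
  have "(phi \<sigma> ^^ n) d = (face_perm E \<sigma> ^^ n) d" for n
  proof (induction n)
    case (Suc n)
    have "(face_perm E \<sigma> ^^ n) d \<in> darts E"
      using permutes_in_funpow_image[OF face_perm_permutes[OF assms(1)] assms(2)] .
    then show ?case
      using Suc.IH by (simp add: face_perm_dart phi_def)
  qed simp
  then show ?thesis
    unfolding orb_def by simp
qed

definition alpha_cut :: "'e set \<Rightarrow> 'e set \<Rightarrow> 'e \<times> bool \<Rightarrow> 'e \<times> bool" where
  "alpha_cut E X d = (if d \<in> darts E \<and> fst d \<notin> X then alpha d else d)"

lemma alpha_cut_involution: "alpha_cut E X (alpha_cut E X d) = d"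
  unfolding alpha_cut_def by (auto simp: darts_mem)

lemma alpha_cut_permutes: "alpha_cut E X permutes darts E"
proof (rule bij_imp_permutes)
  show "bij_betw (alpha_cut E X) (darts E) (darts E)"
    by (rule bij_betwI[of _ _ _ "alpha_cut E X"]) (auto simp: alpha_cut_def darts_mem alpha_cut_involution)
qed (simp add: alpha_cut_def)

lemma card_alpha_cut_orbits:
  assumes "finite E" "X \<subseteq> E"
  shows "card (orb (alpha_cut E X) ` darts E) = card (E - X) + 2 * card X"
proof -
  let ?DX = "{d \<in> darts E. fst d \<in> X}"
  let ?singles = "(\<lambda>d. {d}) ` ?DX"
  let ?pairs = "(\<lambda>e. {(e, True), (e, False)}) ` (E - X)"
  have orbits: "orb (alpha_cut E X) d = (if fst d \<in> X then {d} else {(fst d, True), (fst d, False)})"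
    if "d \<in> darts E" for d
    using that orb_involution[of "alpha_cut E X" d, OF alpha_cut_involution]
    by (cases d) (auto simp: alpha_cut_def alpha_def)
  have "orb (alpha_cut E X) ` darts E = ?singles \<union> ?pairs"
  proof
    show "orb (alpha_cut E X) ` darts E \<subseteq> ?singles \<union> ?pairs"
      using orbits by (auto simp: darts_mem)
    show "?singles \<union> ?pairs \<subseteq> orb (alpha_cut E X) ` darts E"
    proof
      fix C assume "C \<in> ?singles \<union> ?pairs"
      then consider d where "d \<in> ?DX" "C = {d}" | e where "e \<in> E - X" "C = {(e, True), (e, False)}"
        by blast
      then show "C \<in> orb (alpha_cut E X) ` darts E"
      proof cases
        case (1 d)
        then have "C = orb (alpha_cut E X) d" "d \<in> darts E"
          using orbits[of d] by auto
        then show ?thesis by blast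
      next
        case (2 e)
        then have "C = orb (alpha_cut E X) (e, True)" "(e, True) \<in> darts E"
          using orbits[of "(e, True)"] by (auto simp: darts_mem)
        then show ?thesis by blast
      qed
    qed
  qed
  moreover have "card ?singles = 2 * card X"
  proof -
    have "?DX = X \<times> UNIV"
      using assms(2) by (auto simp: darts_mem)
    then show ?thesis
      using assms finite_subset by (simp add: card_image card_cartesian_product)
  qed
  moreover have "card ?pairs = card (E - X)"
    by (rule card_image) (auto simp: inj_on_def)
  moreover have "?singles \<inter> ?pairs = {}"
    by (auto simp: doubleton_eq_iff)
  moreover have "finite ?singles" "finite ?pairs"
    using assms(1) by (simp_all add: darts_def)
  ultimately show ?thesis
    by (simp add: card_Un_disjoint)
qed

text \<open>The faces touched by X, i.e. the vertices of the dual subgraph G*[X*].\<close>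

definition touched :: "'e set \<Rightarrow> ('e \<times> bool \<Rightarrow> 'e \<times> bool) \<Rightarrow> 'e set \<Rightarrow> ('e \<times> bool) set set" where
  "touched E \<sigma> X = (\<lambda>d. orb (phi \<sigma>) d) ` {d \<in> darts E. fst d \<in> X}"

lemma untouched_faces_are_orbits:
  assumes "finite E" "\<sigma> permutes darts E"
  shows "faces E \<sigma> - touched E \<sigma> X \<subseteq> orb (\<sigma> \<circ> alpha_cut E X) ` darts E"
proof
  let ?P = "face_perm E \<sigma>"
  fix f assume f: "f \<in> faces E \<sigma> - touched E \<sigma> X"
  then obtain d0 where d0: "d0 \<in> darts E" "f = orb (phi \<sigma>) d0"
    unfolding faces_def by blast
  note face_orb = orb_phi_face_perm[OF assms(2)]
  have P: "?P permutes darts E" "permutation ?P"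
    using face_perm_permutes[OF assms(2)] finite_darts[OF assms(1)] permutation_permutes by blast+
  have f_P: "f = orb ?P d0"
    using d0 face_orb by simp
  have untouched: "y \<in> darts E" "fst y \<notin> X" if "y \<in> f" for y
  proof -
    show y: "y \<in> darts E"
      using that f_P orb_subset[OF P(1) d0(1)] by blast
    have "orb (phi \<sigma>) y = f"
      using face_orb[OF y] orb_eq[OF P(2)] that f_P by simp
    then show "fst y \<notin> X"
      using f y unfolding touched_def by blast
  qed
  have "(?P ^^ n) d0 = ((\<sigma> \<circ> alpha_cut E X) ^^ n) d0" for n
  proof (induction n)
    case (Suc n)
    have "(?P ^^ n) d0 \<in> f"
      unfolding f_P by (rule orb_iter)
    then show ?case
      using Suc.IH untouched by (simp add: face_perm_dart alpha_cut_def)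
  qed simp
  then have "f = orb (\<sigma> \<circ> alpha_cut E X) d0"
    unfolding f_P orb_def by simp
  then show "f \<in> orb (\<sigma> \<circ> alpha_cut E X) ` darts E"
    using d0(1) by blast
qed

section \<open>Uncrossing minimum cuts\<close>

lemma cutset_sym_diff:
  "cutset E \<sigma> (sym_diff W Z) = sym_diff (cutset E \<sigma> W) (cutset E \<sigma> Z)"
  unfolding cutset_def by auto

lemma sum_sym_diff:
  fixes c :: "'a \<Rightarrow> real"
  assumes "finite A" "finite B"
  shows "sum c (sym_diff A B) = sum c A + sum c B - 2 * sum c (A \<inter> B)"
proof -
  have "sum c (sym_diff A B) = sum c (A - B) + sum c (B - A)"
    using assms by (intro sum.union_disjoint) auto
  moreover have "sum c A = sum c (A \<inter> B) + sum c (A - B)"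
    using sum.Int_Diff[OF assms(1)] .
  moreover have "sum c B = sum c (A \<inter> B) + sum c (B - A)"
    using sum.Int_Diff[OF assms(2), of c A] by (simp add: Int_commute)
  ultimately show ?thesis by simp
qed

text \<open>Flipping the side of a terminal-free set of vertices keeps a cut S-separating, so it cannot
  decrease the cost of a minimum cut.\<close>

lemma min_cut_exchange:
  assumes "min_S_cut E \<sigma> c Q S W" "Z \<subseteq> verts E \<sigma>" "Z \<inter> Q = {}"
  shows "sum c (cutset E \<sigma> W) \<le> sum c (sym_diff (cutset E \<sigma> W) (cutset E \<sigma> Z))"
proof -
  have sep: "S_separating E \<sigma> Q S W"
    using assms(1) unfolding min_S_cut_def by blast
  have "sym_diff W Z \<inter> Q = W \<inter> Q"
    using assms(3) by blast
  moreover have "sym_diff W Z \<subseteq> verts E \<sigma>"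
    using sep assms(2) unfolding S_separating_def by blast
  ultimately have "S_separating E \<sigma> Q S (sym_diff W Z)"
    using sep unfolding S_separating_def by simp
  then have "sum c (cutset E \<sigma> W) \<le> sum c (cutset E \<sigma> (sym_diff W Z))"
    using assms(1) unfolding min_S_cut_def by blast
  then show ?thesis
    unfolding cutset_sym_diff .
qed

text \<open>A terminal-free vertex set whose cut lies inside the union of two minimum cuts has an empty
  cut: otherwise flipping it would give a second cut of the same cost, contradicting the
  distinctness of costs.\<close>

lemma terminal_free_cut_empty:
  fixes c :: "'e \<Rightarrow> real"
  assumes fin: "finite E" and nonneg: "\<forall>e \<in> E. 0 \<le> c e"
    and dist: "\<forall>A B. A \<subseteq> E \<longrightarrow> B \<subseteq> E \<longrightarrow> A \<noteq> B \<longrightarrow> sum c A \<noteq> sum c B"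
    and mS: "min_S_cut E \<sigma> c Q S WS" and mT: "min_S_cut E \<sigma> c Q T WT"
    and Z: "Z \<subseteq> verts E \<sigma>" "Z \<inter> Q = {}"
    and inside: "cutset E \<sigma> Z \<subseteq> cutset E \<sigma> WS \<union> cutset E \<sigma> WT"
  shows "cutset E \<sigma> Z = {}"
proof -
  define ES ET P where "ES = cutset E \<sigma> WS" and "ET = cutset E \<sigma> WT" and "P = cutset E \<sigma> Z"
  have sub: "ES \<subseteq> E" "ET \<subseteq> E" "P \<subseteq> E"
    unfolding ES_def ET_def P_def cutset_def by auto
  then have finite: "finite ES" "finite ET" "finite P"
    using fin finite_subset by blast+
  have "sum c ES \<le> sum c (sym_diff ES P)" "sum c ET \<le> sum c (sym_diff ET P)"
    unfolding ES_def ET_def P_def using min_cut_exchange[OF mS Z] min_cut_exchange[OF mT Z] .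
  then have half: "2 * sum c (ES \<inter> P) \<le> sum c P" "2 * sum c (ET \<inter> P) \<le> sum c P"
    using sum_sym_diff[of ES P c] sum_sym_diff[of ET P c] finite by simp_all
  have "P = (ES \<inter> P) \<union> (ET \<inter> P)"
    using inside unfolding ES_def ET_def P_def by blast
  then have "sum c P = sum c (ES \<inter> P) + sum c (ET \<inter> P) - sum c (ES \<inter> ET \<inter> P)"
    using sum_Un[of "ES \<inter> P" "ET \<inter> P" c] finite by (simp add: Int_ac)
  moreover have "0 \<le> sum c (ES \<inter> ET \<inter> P)"
    using nonneg sub by (intro sum_nonneg) blast
  ultimately have "sum c (sym_diff ES P) = sum c ES"
    using half sum_sym_diff[of ES P c] finite by linarith
  moreover have "sym_diff ES P \<subseteq> E"
    using sub by blast
  ultimately have "sym_diff ES P = ES"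
    using dist[rule_format, of "sym_diff ES P" ES] sub(1) by blast
  then show ?thesis
    unfolding P_def by blast
qed

lemma cut_free_vertex_set_is_all:
  assumes conn: "connected_map E \<sigma>" and empty: "cutset E \<sigma> Z = {}"
    and v: "v \<in> verts E \<sigma>" "v \<in> Z" and w: "w \<in> verts E \<sigma>"
  shows "w \<in> Z"
proof -
  have "(v, w) \<in> (adj E \<sigma>)\<^sup>*"
    using conn v w unfolding connected_map_def by blast
  then show ?thesis
  proof (induction rule: rtrancl_induct)
    case base
    show ?case using v(2) .
  next
    case (step y z)
    then obtain e b where "e \<in> E" "y = orb \<sigma> (e, b)" "z = orb \<sigma> (e, \<not> b)"
      unfolding adj_def by blast
    then show ?case
      using empty step.IH unfolding cutset_def by (cases b) auto
  qed
qed

text \<open>Every component of the graph generated by sigma and alpha_cut (the graph G with the cut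
  edges deleted) contains a terminal.\<close>

lemma component_contains_terminal:
  fixes c :: "'e \<Rightarrow> real"
  assumes fin: "finite E" and \<sigma>: "\<sigma> permutes darts E" and conn: "connected_map E \<sigma>"
    and nonneg: "\<forall>e \<in> E. 0 \<le> c e"
    and dist: "\<forall>A B. A \<subseteq> E \<longrightarrow> B \<subseteq> E \<longrightarrow> A \<noteq> B \<longrightarrow> sum c A \<noteq> sum c B"
    and Q: "Q \<subseteq> verts E \<sigma>" "Q \<noteq> {}"
    and mS: "min_S_cut E \<sigma> c Q S WS" and mT: "min_S_cut E \<sigma> c Q T WT"
    and d: "d \<in> darts E"
  defines "R \<equiv> fgraph (darts E) \<sigma> \<union> fgraph (darts E) (alpha_cut E (cutset E \<sigma> WS \<union> cutset E \<sigma> WT))"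
  shows "\<exists>q \<in> Q. q \<subseteq> component R d"
proof (rule ccontr)
  let ?C = "component R d"
  let ?X = "cutset E \<sigma> WS \<union> cutset E \<sigma> WT"
  assume no_terminal: "\<not> (\<exists>q \<in> Q. q \<subseteq> ?C)"
  define Z where "Z = {v \<in> verts E \<sigma>. v \<subseteq> ?C}"
  have vertex_in: "orb \<sigma> a \<in> Z \<longleftrightarrow> a \<in> ?C" if a: "a \<in> darts E" for a
  proof -
    have "a \<in> ?C \<Longrightarrow> orb \<sigma> a \<subseteq> ?C"
      using orb_subset_component[OF finite_darts[OF fin] \<sigma> _ _ a] unfolding R_def by blast
    moreover have "orb \<sigma> a \<in> verts E \<sigma>"
      using a unfolding verts_def by blast
    ultimately show ?thesis
      unfolding Z_def using orb_self[of a \<sigma>] by blast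
  qed
  have "cutset E \<sigma> Z \<subseteq> ?X"
  proof
    fix e assume e: "e \<in> cutset E \<sigma> Z"
    then have darts: "(e, True) \<in> darts E" "(e, False) \<in> darts E"
      unfolding cutset_def by (simp_all add: darts_mem)
    show "e \<in> ?X"
    proof (rule ccontr)
      assume "e \<notin> ?X"
      then have "((e, True), (e, False)) \<in> R"
        using fgraph_edge[OF darts(1), of "alpha_cut E ?X"] darts(1)
        unfolding R_def by (simp add: alpha_cut_def alpha_def)
      then have "orb \<sigma> (e, True) \<in> Z \<longleftrightarrow> orb \<sigma> (e, False) \<in> Z"
        using component_edge_closed[of _ _ R d] vertex_in[OF darts(1)] vertex_in[OF darts(2)] by blast
      then show False
        using e unfolding cutset_def by simp
    qed
  qed
  moreover have "Z \<subseteq> verts E \<sigma>" "Z \<inter> Q = {}"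
    using no_terminal unfolding Z_def by auto
  ultimately have "cutset E \<sigma> Z = {}"
    using terminal_free_cut_empty[OF fin nonneg dist mS mT] by blast
  moreover obtain q where "q \<in> Q"
    using Q(2) by blast
  moreover have "orb \<sigma> d \<in> verts E \<sigma>" "orb \<sigma> d \<in> Z"
    using d vertex_in[OF d] unfolding verts_def component_def by auto
  ultimately have "q \<in> Z"
    using cut_free_vertex_set_is_all[OF conn] Q(1) by blast
  then show False
    using \<open>q \<in> Q\<close> no_terminal unfolding Z_def by blast
qed

text \<open>Choosing a terminal inside each component is injective, since terminals are nonempty vertices
  and distinct components are disjoint; so there are at most |Q| components.\<close>

lemma components_le_terminals:
  fixes c :: "'e \<Rightarrow> real"
  assumes fin: "finite E" and \<sigma>: "\<sigma> permutes darts E" and conn: "connected_map E \<sigma>"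
    and nonneg: "\<forall>e \<in> E. 0 \<le> c e"
    and dist: "\<forall>A B. A \<subseteq> E \<longrightarrow> B \<subseteq> E \<longrightarrow> A \<noteq> B \<longrightarrow> sum c A \<noteq> sum c B"
    and Q: "Q \<subseteq> verts E \<sigma>" "Q \<noteq> {}"
    and mS: "min_S_cut E \<sigma> c Q S WS" and mT: "min_S_cut E \<sigma> c Q T WT"
  shows "ncomp (darts E)
      (fgraph (darts E) \<sigma> \<union> fgraph (darts E) (alpha_cut E (cutset E \<sigma> WS \<union> cutset E \<sigma> WT)))
    \<le> card Q"
    (is "ncomp _ ?R \<le> _")
proof -
  let ?cs = "component ?R ` darts E"
  define terminal where "terminal C = (SOME q. q \<in> Q \<and> q \<subseteq> C)" for C
  have terminal: "terminal C \<in> Q" "terminal C \<subseteq> C" if "C \<in> ?cs" for C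
    using that component_contains_terminal[OF fin \<sigma> conn nonneg dist Q mS mT]
      someI_ex[of "\<lambda>q. q \<in> Q \<and> q \<subseteq> C"]
    unfolding terminal_def by blast+
  have "inj_on terminal ?cs"
  proof (rule inj_onI)
    fix C1 C2 assume C: "C1 \<in> ?cs" "C2 \<in> ?cs" "terminal C1 = terminal C2"
    obtain x where "x \<in> darts E" "terminal C1 = orb \<sigma> x"
      using terminal(1)[OF C(1)] Q(1) unfolding verts_def by blast
    then have "x \<in> terminal C1" "x \<in> terminal C2"
      using orb_self[of x \<sigma>] C(3) by auto
    then have "x \<in> C1" "x \<in> C2"
      using terminal(2)[OF C(1)] terminal(2)[OF C(2)] by blast+
    moreover obtain d1 d2 where "C1 = component ?R d1" "C2 = component ?R d2"
      using C(1,2) by blast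
    ultimately show "C1 = C2"
      using component_meet[of x ?R d1 d2] by simp
  qed
  moreover have "terminal ` ?cs \<subseteq> Q"
    using terminal(1) by blast
  moreover have "finite Q"
    using Q(1) finite_subset finite_imageI[OF finite_darts[OF fin]] unfolding verts_def by blast
  ultimately show ?thesis
    unfolding ncomp_def by (rule card_inj_on_le)
qed

section \<open>Dual degrees\<close>

lemma even_card_changes:
  fixes B :: "'a \<Rightarrow> bool"
  assumes "finite F" "bij_betw p F F"
  shows "even (card {x \<in> F. B x \<noteq> B (p x)})"
proof -
  let ?N = "{x \<in> F. B x}"
  let ?M = "{x \<in> F. B (p x)}"
  have "p ` ?M = ?N"
    using assms(2) unfolding bij_betw_def by force
  moreover have "inj_on p ?M"
    using bij_betw_imp_inj_on[OF assms(2)] by (rule inj_on_subset) blast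
  ultimately have same: "card ?M = card ?N"
    using card_image by metis
  have fin: "finite ?N" "finite ?M"
    using assms(1) by simp_all
  have "{x \<in> F. B x \<noteq> B (p x)} = (?N - ?M) \<union> (?M - ?N)"
    by blast
  then have "card {x \<in> F. B x \<noteq> B (p x)} = card (?N - ?M) + card (?M - ?N)"
    using fin by (simp add: card_Un_disjoint[of "?N - ?M" "?M - ?N"] Diff_Int_distrib2)
  also have "\<dots> = 2 * (card ?N - card (?N \<inter> ?M))"
    using fin same by (simp add: card_Diff_subset_Int Int_commute)
  finally show ?thesis by simp
qed

text \<open>The boundary walk of a face crosses any cut an even number of times.\<close>

lemma dual_deg_cutset_even:
  assumes fin: "finite E" and \<sigma>: "\<sigma> permutes darts E" and f: "f \<in> faces E \<sigma>"
  shows "even (dual_deg E \<sigma> (cutset E \<sigma> W) f)"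
proof -
  let ?P = "face_perm E \<sigma>"
  define B where "B d = (orb \<sigma> d \<in> W)" for d
  have P: "?P permutes darts E" "permutation ?P" and perm_\<sigma>: "permutation \<sigma>"
    using face_perm_permutes[OF \<sigma>] \<sigma> finite_darts[OF fin] permutation_permutes by blast+
  obtain d0 where d0: "d0 \<in> darts E" "f = orb ?P d0"
    using f orb_phi_face_perm[OF \<sigma>] unfolding faces_def by blast
  have f_darts: "f \<subseteq> darts E"
    using orb_subset[OF P(1) d0(1)] d0(2) by simp
  have on_face: "orb (phi \<sigma>) d = f \<longleftrightarrow> d \<in> f" if "d \<in> darts E" for d
    using orb_phi_face_perm[OF \<sigma> that] orb_eq[OF P(2), of d d0] orb_self[of d ?P] d0(2) by auto
  have crossing: "fst d \<in> cutset E \<sigma> W \<longleftrightarrow> B d \<noteq> B (?P d)" if d: "d \<in> darts E" for d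
  proof -
    have "orb \<sigma> (\<sigma> (alpha d)) = orb \<sigma> (alpha d)"
      by (rule orb_eq[OF perm_\<sigma> orb_step[OF orb_self]])
    then have "B (?P d) = B (alpha d)"
      unfolding B_def using face_perm_dart[OF d] by simp
    then show ?thesis
      using d unfolding cutset_def B_def alpha_def by (cases d; cases "snd d") (auto simp: darts_mem)
  qed
  have "bij_betw ?P f f"
    unfolding d0(2) by (rule bij_betw_orb[OF P(2)])
  moreover have "{d \<in> darts E. fst d \<in> cutset E \<sigma> W \<and> orb (phi \<sigma>) d = f} = {d \<in> f. B d \<noteq> B (?P d)}"
    using on_face crossing f_darts by blast
  ultimately show ?thesis
    unfolding dual_deg_def using even_card_changes[of f ?P B] f_darts finite_darts[OF fin]
    by (simp add: finite_subset)
qed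

lemma touched_subset_faces: "touched E \<sigma> X \<subseteq> faces E \<sigma>"
  unfolding touched_def faces_def by blast

lemma dual_deg_pos_iff:
  assumes "finite E"
  shows "0 < dual_deg E \<sigma> X f \<longleftrightarrow> f \<in> touched E \<sigma> X"
  unfolding dual_deg_def touched_def using finite_darts[OF assms] by (auto simp: card_gt_0_iff)

text \<open>Handshake lemma in the dual: each edge of X contributes its two darts.\<close>

lemma sum_dual_deg:
  assumes "finite E" "X \<subseteq> E"
  shows "(\<Sum>f \<in> touched E \<sigma> X. dual_deg E \<sigma> X f) = 2 * card X"
proof -
  let ?DX = "{d \<in> darts E. fst d \<in> X}"
  have "?DX = X \<times> UNIV"
    using assms(2) by (auto simp: darts_mem)
  then have "2 * card X = card ?DX"
    using assms finite_subset by (simp add: card_cartesian_product)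
  also have "\<dots> = (\<Sum>d \<in> ?DX. 1)"
    by simp
  also have "\<dots> = (\<Sum>f \<in> touched E \<sigma> X. \<Sum>d \<in> {d \<in> ?DX. orb (phi \<sigma>) d = f}. 1)"
    unfolding touched_def using finite_darts[OF assms(1)] by (intro sum.image_gen) simp
  also have "\<dots> = (\<Sum>f \<in> touched E \<sigma> X. dual_deg E \<sigma> X f)"
    unfolding dual_deg_def by (simp add: conj_assoc)
  finally show ?thesis ..
qed

lemma dual_deg_union_ge_two:
  assumes "finite E" "f \<in> touched E \<sigma> (A \<union> B)"
    and "even (dual_deg E \<sigma> A f)" "even (dual_deg E \<sigma> B f)"
  shows "2 \<le> dual_deg E \<sigma> (A \<union> B) f"
proof -
  let ?darts = "\<lambda>X. {d \<in> darts E. fst d \<in> X \<and> orb (phi \<sigma>) d = f}"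
  have union: "?darts (A \<union> B) = ?darts A \<union> ?darts B" and finite: "finite (?darts A)" "finite (?darts B)"
    using finite_darts[OF assms(1)] by auto
  have "dual_deg E \<sigma> (A \<union> B) f \<noteq> 1"
  proof
    assume one: "dual_deg E \<sigma> (A \<union> B) f = 1"
    then have "card (?darts A) \<le> 1" "card (?darts B) \<le> 1"
      using union finite card_mono[of "?darts A \<union> ?darts B"] unfolding dual_deg_def by simp_all
    then have "?darts A = {}" "?darts B = {}"
      using assms(3,4) finite unfolding dual_deg_def by (auto simp: le_Suc_eq)
    then have "?darts (A \<union> B) = {}"
      using union by blast
    then have "dual_deg E \<sigma> (A \<union> B) f = 0"
      unfolding dual_deg_def by (simp only: card.empty)
    then show False
      using one by simp
  qed
  moreover have "0 < dual_deg E \<sigma> (A \<union> B) f"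
    using dual_deg_pos_iff[OF assms(1)] assms(2) by blast
  ultimately show ?thesis by linarith
qed

lemma count_high_degrees:
  fixes deg :: "'a \<Rightarrow> nat"
  assumes "finite F" "\<forall>f \<in> F. 2 \<le> deg f"
  shows "2 * card F + card {f \<in> F. 2 < deg f} \<le> (\<Sum>f \<in> F. deg f)"
proof -
  have "card {f \<in> F. 2 < deg f} = (\<Sum>f \<in> F. if 2 < deg f then 1 else 0)"
    using sum.inter_filter[OF assms(1), of "\<lambda>_. 1 :: nat"] by simp
  then have "2 * card F + card {f \<in> F. 2 < deg f} = (\<Sum>f \<in> F. 2 + (if 2 < deg f then 1 else 0))"
    by (simp only: sum.distrib) simp
  also have "\<dots> \<le> (\<Sum>f \<in> F. deg f)"
    using assms(2) by (intro sum_mono) auto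
  finally show ?thesis .
qed

text \<open>The genus inequality for sigma and alpha_cut, combined with Euler's formula.\<close>

lemma cut_edges_vs_touched_faces:
  fixes c :: "'e \<Rightarrow> real"
  assumes plane: "connected_plane_map E \<sigma>"
    and nonneg: "\<forall>e \<in> E. 0 \<le> c e"
    and dist: "\<forall>A B. A \<subseteq> E \<longrightarrow> B \<subseteq> E \<longrightarrow> A \<noteq> B \<longrightarrow> sum c A \<noteq> sum c B"
    and Q: "Q \<subseteq> verts E \<sigma>" "Q \<noteq> {}"
    and mS: "min_S_cut E \<sigma> c Q S WS" and mT: "min_S_cut E \<sigma> c Q T WT"
  defines "X \<equiv> cutset E \<sigma> WS \<union> cutset E \<sigma> WT"
  shows "card X + 2 \<le> card (touched E \<sigma> X) + 2 * card Q"
proof -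
  let ?D = "darts E"
  have fin: "finite E" and \<sigma>: "\<sigma> permutes ?D" and conn: "connected_map E \<sigma>"
    and euler: "int (card (verts E \<sigma>)) - int (card E) + int (card (faces E \<sigma>)) = 2"
    using plane unfolding connected_plane_map_def by auto
  have finD: "finite ?D"
    using finite_darts[OF fin] .
  have XE: "X \<subseteq> E"
    unfolding X_def cutset_def by auto
  have "ncomp ?D (fgraph ?D \<sigma>) + ncomp ?D (fgraph ?D (alpha_cut E X))
      + ncomp ?D (fgraph ?D (\<sigma> \<circ> alpha_cut E X))
      \<le> card ?D + 2 * ncomp ?D (fgraph ?D \<sigma> \<union> fgraph ?D (alpha_cut E X))"
    by (rule cycle_count_inequality[OF finD \<sigma> alpha_cut_permutes])
  moreover have "ncomp ?D (fgraph ?D \<sigma>) = card (verts E \<sigma>)"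
    unfolding ncomp_fgraph[OF finD \<sigma>] verts_def ..
  moreover have "ncomp ?D (fgraph ?D (alpha_cut E X)) = card (E - X) + 2 * card X"
    unfolding ncomp_fgraph[OF finD alpha_cut_permutes] by (rule card_alpha_cut_orbits[OF fin XE])
  moreover have "card (faces E \<sigma> - touched E \<sigma> X) \<le> ncomp ?D (fgraph ?D (\<sigma> \<circ> alpha_cut E X))"
    unfolding ncomp_fgraph[OF finD permutes_compose[OF alpha_cut_permutes \<sigma>]]
    using untouched_faces_are_orbits[OF fin \<sigma>] finD by (intro card_mono) auto
  moreover have "ncomp ?D (fgraph ?D \<sigma> \<union> fgraph ?D (alpha_cut E X)) \<le> card Q"
    unfolding X_def by (rule components_le_terminals[OF fin \<sigma> conn nonneg dist Q mS mT])
  moreover have "finite (faces E \<sigma>)"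
    unfolding faces_def using finD by simp
  then have "card (faces E \<sigma> - touched E \<sigma> X) = card (faces E \<sigma>) - card (touched E \<sigma> X)"
    "card (touched E \<sigma> X) \<le> card (faces E \<sigma>)"
    using touched_subset_faces[of E \<sigma> X] by (simp_all add: card_Diff_subset finite_subset card_mono)
  moreover have "card (E - X) + card X = card E"
    using XE fin by (simp add: card_Diff_subset finite_subset card_mono)
  moreover have "card ?D = 2 * card E"
    using card_darts[OF fin] .
  ultimately show ?thesis
    using euler by linarith
qed

text \<open>The dual subgraph has at most 4|Q| - 4 \<le> 6|Q| vertices of degree greater than two.\<close>

theorem corollary2p5:
  fixes E :: "'e set" and \<sigma> :: "'e \<times> bool \<Rightarrow> 'e \<times> bool" and c :: "'e \<Rightarrow> real"
    and Q S T WS WT :: "('e \<times> bool) set set"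
  assumes "connected_plane_map E \<sigma>"
    and "\<forall>e \<in> E. c e > 0"
    and "\<forall>A B. A \<subseteq> E \<longrightarrow> B \<subseteq> E \<longrightarrow> A \<noteq> B \<longrightarrow> sum c A \<noteq> sum c B"
    and "Q \<subseteq> verts E \<sigma>"
    and "S \<subset> Q" "S \<noteq> {}" "T \<subset> Q" "T \<noteq> {}"
    and "min_S_cut E \<sigma> c Q S WS" "min_S_cut E \<sigma> c Q T WT"
  shows "card {f \<in> faces E \<sigma>. dual_deg E \<sigma> (cutset E \<sigma> WS \<union> cutset E \<sigma> WT) f > 2}
           \<le> 6 * card Q"
proof -
  define X where "X = cutset E \<sigma> WS \<union> cutset E \<sigma> WT"
  let ?deg = "dual_deg E \<sigma> X"
  have fin: "finite E" and \<sigma>: "\<sigma> permutes darts E"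
    using assms(1) unfolding connected_plane_map_def by auto
  have XE: "X \<subseteq> E"
    unfolding X_def cutset_def by auto
  have finT: "finite (touched E \<sigma> X)"
    unfolding touched_def using finite_darts[OF fin] by simp
  have "\<forall>f \<in> touched E \<sigma> X. 2 \<le> ?deg f"
    using dual_deg_union_ge_two[OF fin] dual_deg_cutset_even[OF fin \<sigma>] touched_subset_faces
    unfolding X_def by blast
  then have count: "2 * card (touched E \<sigma> X) + card {f \<in> touched E \<sigma> X. 2 < ?deg f} \<le> 2 * card X"
    using count_high_degrees[OF finT, of ?deg] sum_dual_deg[OF fin XE, of \<sigma>] by simp
  have high: "{f \<in> faces E \<sigma>. ?deg f > 2} = {f \<in> touched E \<sigma> X. 2 < ?deg f}"
    using dual_deg_pos_iff[OF fin, of \<sigma> X] touched_subset_faces[of E \<sigma> X]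
    by (auto dest: less_trans[OF zero_less_numeral[of "num.Bit0 num.One"]])
  have "card X + 2 \<le> card (touched E \<sigma> X) + 2 * card Q"
    unfolding X_def using assms(2-6,9,10)
    by (intro cut_edges_vs_touched_faces[OF assms(1)]) (auto simp: less_imp_le)
  then show ?thesis
    unfolding X_def[symmetric] high using count by linarith
qed

end
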